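(* Consider a UVP instance with finite configuration set $\mathcal{X}\subset\mathbb{R}^d$, maximum per-configuration budget $T$, total budget $B$, and unknown value function $A$ satisfying the monotonicity and smoothness assumptions with parameter $\epsilon>0$. Let $k=\lfloor B/T\rfloor$ denote the number of configurations selected by Enhanced-FullCent, and let $r_k^\star$ be the optimal $k$-center radius of $\mathcal{X}$. Then Enhanced-FullCent (run with parameter $\epsilon$) achieves a $(1-2\epsilon r_k^\star)$-approximation for the UVP problem: its output $\hat{\mathbf{x}}$ satisfies $A(\hat{\mathbf{x}},T)\ge(1-2\epsilon r_k^\star)\max_{\mathbf{x}\in\mathcal{X}}A(\mathbf{x},T)$.
   Context: UVP problem: $A:\mathbb{R}^d\times[T]\to[0,1]$ is unknown ($[T]=\{1,\dots,T\}$); $\mathcal{X}=\{\mathbf{x}_1,\dots,\mathbf{x}_n\}$ is known; the goal is $\max_{b_1,\dots,b_n}\max_i A(\mathbf{x}_i,b_i)$ subject to $\sum_ib_i\le B$. Obtaining $A(\mathbf{x},b)$ requires evaluating $A(\mathbf{x},1),\dots,A(\mathbf{x},b)$ sequentially, costing $b$ units. Assumption 1: $b_1\le b_2\Rightarrow A(\mathbf{x},b_1)\le A(\mathbf{x},b_2)$. Assumption 2: for all $\mathbf{x}_i,\mathbf{x}_j\in\mathcal{X}$, $\min_{b\in[T]}A(\mathbf{x}_i,b)/A(\mathbf{x}_j,b)\ge1-\epsilon\|\mathbf{x}_i-\mathbf{x}_j\|_2$ (ratio $=1$ if both values are $0$, $+\infty$ if only the denominator is $0$). $r_k^\star=\min_{\mathcal{C}\subseteq\mathcal{X},|\mathcal{C}|=k}\max_{\mathbf{x}\in\mathcal{X}}\min_{\mathbf{c}\in\mathcal{C}}\|\mathbf{x}-\mathbf{c}\|_2$.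 For a center $\mathbf{c}$ with evaluated history, $H^{(\mathbf{c})}_{\mathrm{last}}$ is its most recently observed value. Enhanced k-center $\textsc{E-KCenter}(k,\mathcal{C},\mathcal{X},t,\epsilon)$: with $\mathcal{C}^{(0)}=\mathcal{C}$, for $i=1,\dots,k$: for each $\mathbf{x}\in\mathcal{X}\setminus\mathcal{C}^{(i-1)}$ and $\mathbf{c}\in\mathcal{C}^{(i-1)}$ compute $\eta^{(i)}_{\mathbf{c}}=\max_{\mathbf{c}'\in\mathcal{C}^{(i-1)}}H^{(\mathbf{c}')}_{\mathrm{last}}/H^{(\mathbf{c})}_{\mathrm{last}}$ and the enhanced distance $\tilde d^{(i)}(\mathbf{x},\mathbf{c})=\min\{\|\mathbf{x}-\mathbf{c}\|_2,\ \eta^{(i)}_{\mathbf{c}}\|\mathbf{x}-\mathbf{c}\|_2-\frac1\epsilon(\eta^{(i)}_{\mathbf{c}}-1)\}$; let $\Delta^{(i)}(\mathbf{x})=\min_{\mathbf{c}\in\mathcal{C}^{(i-1)}}\tilde d^{(i)}(\mathbf{x},\mathbf{c})$ (a minimum over the empty set is $+\infty$); choose $\mathbf{c}_i\in\arg\max_{\mathbf{x}\in\mathcal{X}\setminus\mathcal{C}^{(i-1)}}\Delta^{(i)}(\mathbf{x})$, evaluate $A(\mathbf{c}_i,1),\dots,A(\mathbf{c}_i,t)$, and set $\mathcal{C}^{(i)}=\mathcal{C}^{(i-1)}\cup\{\mathbf{c}_i\}$. Enhanced-FullCent$(B,T,\mathcal{X},\epsilon)$: with $k=\lfloor B/T\rfloor$,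 run $\textsc{E-KCenter}(k,\emptyset,\mathcal{X},T,\epsilon)$ to obtain centers $\mathcal{C}$ (each evaluated up to budget $T$) and return $\arg\max_{\mathbf{c}\in\mathcal{C}}A(\mathbf{c},T)$. *)

theory Defs
  imports "HOL-Analysis.Analysis" "HOL-Library.Extended_Real"
begin

definition uvp_ratio :: "real \<Rightarrow> real \<Rightarrow> ereal" where
  "uvp_ratio p q = (if q = 0 then (if p = 0 then 1 else \<infinity>) else ereal (p / q))"

definition uvp_monotone :: "('a \<Rightarrow> nat \<Rightarrow> real) \<Rightarrow> nat \<Rightarrow> bool" where
  "uvp_monotone A T \<longleftrightarrow>
     (\<forall>x b1 b2. b1 \<in> {1..T} \<longrightarrow> b2 \<in> {1..T} \<longrightarrow> b1 \<le> b2 \<longrightarrow> A x b1 \<le> A x b2)"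

definition uvp_smooth :: "('a::real_normed_vector \<Rightarrow> nat \<Rightarrow> real) \<Rightarrow> 'a set \<Rightarrow> nat \<Rightarrow> real \<Rightarrow> bool" where
  "uvp_smooth A X T eps \<longleftrightarrow>
     (\<forall>xi\<in>X. \<forall>xj\<in>X.
        (MIN b\<in>{1..T}. uvp_ratio (A xi b) (A xj b)) \<ge> ereal (1 - eps * norm (xi - xj)))"

definition kcenter_radius :: "'a::real_normed_vector set \<Rightarrow> nat \<Rightarrow> real" where
  "kcenter_radius X k =
     Min {Max ((\<lambda>x. Min ((\<lambda>c. norm (x - c)) ` C)) ` X) | C. C \<subseteq> X \<and> card C = k}"

definition enh_eta :: "('a \<Rightarrow> real) \<Rightarrow> 'a set \<Rightarrow> 'a \<Rightarrow> ereal" where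
  "enh_eta H C c = uvp_ratio (Max (H ` C)) (H c)"

text \<open>min{d, eta*d - (eta-1)/eps}; for eta = +infinity this is the limiting value
  (-infinity if d < 1/eps, and d otherwise).\<close>
definition enh_formula :: "real \<Rightarrow> ereal \<Rightarrow> real \<Rightarrow> ereal" where
  "enh_formula eps eta d =
     (if eta = \<infinity> then (if d < 1 / eps then -\<infinity> else ereal d)
      else min (ereal d) (ereal (real_of_ereal eta * d - (real_of_ereal eta - 1) / eps)))"

definition enh_dist :: "real \<Rightarrow> ('a::real_normed_vector \<Rightarrow> real) \<Rightarrow> 'a set \<Rightarrow> 'a \<Rightarrow> 'a \<Rightarrow> ereal" where
  "enh_dist eps H C x c = enh_formula eps (enh_eta H C c) (norm (x - c))"

text \<open>Delta(x) = min over centers of the enhanced distance (+infinity if C is empty).\<close>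
definition enh_Delta :: "real \<Rightarrow> ('a::real_normed_vector \<Rightarrow> real) \<Rightarrow> 'a set \<Rightarrow> 'a \<Rightarrow> ereal" where
  "enh_Delta eps H C x = (INF c\<in>C. enh_dist eps H C x c)"

text \<open>cs is a possible run (any tie-breaking) of E-KCenter(k, C0, X, t, eps), where
  H c is the last observed value of centre c (for new centres: A c t; for the
  initial centres: their given history).\<close>
definition ekcenter_run :: "nat \<Rightarrow> 'a set \<Rightarrow> 'a set \<Rightarrow> real \<Rightarrow> ('a::real_normed_vector \<Rightarrow> real) \<Rightarrow> 'a list \<Rightarrow> bool" where
  "ekcenter_run k C0 X eps H cs \<longleftrightarrow>
     length cs = k \<and>
     (\<forall>i<k. let C = C0 \<union> set (take i cs) in
        cs ! i \<in> X - C \<and>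
        (\<forall>x\<in>X - C. enh_Delta eps H C x \<le> enh_Delta eps H C (cs ! i)))"

definition enhanced_fullcent_output :: "nat \<Rightarrow> nat \<Rightarrow> 'a set \<Rightarrow> real \<Rightarrow> ('a::real_normed_vector \<Rightarrow> nat \<Rightarrow> real) \<Rightarrow> 'a \<Rightarrow> bool" where
  "enhanced_fullcent_output B T X eps A xhat \<longleftrightarrow>
     (\<exists>cs. ekcenter_run (B div T) {} X eps (\<lambda>c. A c T) cs \<and>
        xhat \<in> set cs \<and> (\<forall>c\<in>set cs. A c T \<le> A xhat T))"

end

theory Submission
  imports Defs
begin

text \<open>Let \<open>x\<^sup>*\<close> maximize \<open>A(\<cdot>, T)\<close> and \<open>r = r\<^sub>k\<^sup>*\<close>. If the output were worse than
  \<open>(1 - 2\<epsilon>r) A(x\<^sup>*, T)\<close>, so would be every centre; by smoothness, the enhanced distance from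
  \<open>x\<^sup>*\<close> to every centre then exceeds \<open>2r\<close> in every round. Since each new centre maximizes
  \<open>\<Delta>\<close> and \<open>\<Delta>\<close> never exceeds the true distance, the \<open>k\<close> centres together with \<open>x\<^sup>*\<close> are
  \<open>k + 1\<close> points of \<open>X\<close> pairwise more than \<open>2r\<close> apart. Two of them share a centre of an
  optimal \<open>k\<close>-centre solution, which contradicts the triangle inequality.\<close>

lemma uvp_smooth_lower_bound:
  assumes "uvp_smooth A X T eps" "x \<in> X" "y \<in> X" "b \<in> {1..T}" "A y b > 0"
  shows "(1 - eps * norm (x - y)) * A y b \<le> A x b"
proof -
  have "ereal (1 - eps * norm (x - y)) \<le> (MIN b\<in>{1..T}. uvp_ratio (A x b) (A y b))"
    using assms(1-3) unfolding uvp_smooth_def by blast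
  also have "\<dots> \<le> uvp_ratio (A x b) (A y b)"
    using assms(4) by (intro Min_le) auto
  also have "\<dots> = ereal (A x b / A y b)"
    using assms(5) by (simp add: uvp_ratio_def)
  finally show ?thesis using assms(5) by (simp add: field_simps)
qed

lemma kcenter_radius_attained:
  fixes X :: "'a::real_normed_vector set"
  assumes "finite X" and "1 \<le> k" and "k \<le> card X"
  obtains C where "C \<subseteq> X" and "card C = k"
    and "\<And>x. x \<in> X \<Longrightarrow> \<exists>c\<in>C. norm (x - c) \<le> kcenter_radius X k"
proof -
  define radius where "radius C = Max ((\<lambda>x. Min ((\<lambda>c. norm (x - c)) ` C)) ` X)" for C
  define candidates where "candidates = {C. C \<subseteq> X \<and> card C = k}"
  have "candidates \<subseteq> Pow X" unfolding candidates_def by blast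
  then have "finite candidates"
    using \<open>finite X\<close> by (rule finite_subset[OF _ finite_Pow_iff[THEN iffD2]])
  moreover have "candidates \<noteq> {}"
    using obtain_subset_with_card_n[OF \<open>k \<le> card X\<close>] unfolding candidates_def by blast
  ultimately have "Min (radius ` candidates) \<in> radius ` candidates" by simp
  moreover have "kcenter_radius X k = Min (radius ` candidates)"
    unfolding kcenter_radius_def radius_def candidates_def by (simp only: setcompr_eq_image)
  ultimately obtain C where C: "C \<subseteq> X" "card C = k" and r: "kcenter_radius X k = radius C"
    unfolding candidates_def by auto
  have "finite C" "C \<noteq> {}"
    using C \<open>finite X\<close> \<open>1 \<le> k\<close> by (auto intro: finite_subset)
  have "\<exists>c\<in>C. norm (x - c) \<le> kcenter_radius X k" if "x \<in> X" for x
  proof -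
    have "Min ((\<lambda>c. norm (x - c)) ` C) \<in> (\<lambda>c. norm (x - c)) ` C"
      using \<open>finite C\<close> \<open>C \<noteq> {}\<close> by simp
    moreover have "Min ((\<lambda>c. norm (x - c)) ` C) \<le> radius C"
      unfolding radius_def using \<open>finite X\<close> that by simp
    ultimately show ?thesis using r by auto
  qed
  with C show ?thesis using that by blast
qed

lemma kcenter_radius_nonneg:
  fixes X :: "'a::real_normed_vector set"
  assumes "finite X" and "1 \<le> k" and "k \<le> card X"
  shows "0 \<le> kcenter_radius X k"
proof -
  obtain C where "\<And>x. x \<in> X \<Longrightarrow> \<exists>c\<in>C. norm (x - c) \<le> kcenter_radius X k"
    using kcenter_radius_attained[OF assms] by blast
  moreover obtain x where "x \<in> X" using assms by fastforce
  ultimately show ?thesis by (meson norm_ge_zero order_trans)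
qed

lemma kcenter_radius_separated_card_le:
  fixes X :: "'a::real_normed_vector set"
  assumes "finite X" and "1 \<le> k" and "k \<le> card X" and "P \<subseteq> X"
    and sep: "pairwise (\<lambda>p q. 2 * kcenter_radius X k < norm (p - q)) P"
  shows "card P \<le> k"
proof -
  let ?r = "kcenter_radius X k"
  obtain C where C: "C \<subseteq> X" "card C = k"
    and cover: "\<And>x. x \<in> X \<Longrightarrow> \<exists>c\<in>C. norm (x - c) \<le> ?r"
    using kcenter_radius_attained[OF assms(1-3)] by blast
  define centre where "centre p = (SOME c. c \<in> C \<and> norm (p - c) \<le> ?r)" for p
  have centre: "centre p \<in> C" "norm (p - centre p) \<le> ?r" if "p \<in> P" for p
  proof -
    have "\<exists>c. c \<in> C \<and> norm (p - c) \<le> ?r" using cover that \<open>P \<subseteq> X\<close> by blast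
    from someI_ex[OF this] show "centre p \<in> C" "norm (p - centre p) \<le> ?r"
      unfolding centre_def by blast+
  qed
  have "inj_on centre P"
  proof (rule inj_onI, rule ccontr)
    fix p q assume "p \<in> P" "q \<in> P" "centre p = centre q" "p \<noteq> q"
    then have "norm (p - q) \<le> norm (p - centre p) + norm (q - centre q)"
      using norm_triangle_ineq4[of "p - centre p" "q - centre q"] by simp
    also have "\<dots> \<le> 2 * ?r"
      using centre(2)[OF \<open>p \<in> P\<close>] centre(2)[OF \<open>q \<in> P\<close>] by simp
    finally have "norm (p - q) \<le> 2 * ?r" .
    moreover have "2 * ?r < norm (p - q)"
      using sep \<open>p \<in> P\<close> \<open>q \<in> P\<close> \<open>p \<noteq> q\<close> by (simp add: pairwise_def)
    ultimately show False by simp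
  qed
  then have "card P \<le> card C"
    using centre C(1) \<open>finite X\<close> by (intro card_inj_on_le) (auto intro: finite_subset)
  with C(2) show ?thesis by simp
qed

lemma enh_formula_le_dist: "enh_formula eps eta d \<le> ereal d"
  unfolding enh_formula_def by auto

lemma enh_Delta_le_norm:
  assumes "c \<in> C"
  shows "enh_Delta eps H C x \<le> ereal (norm (x - c))"
proof -
  have "enh_Delta eps H C x \<le> enh_dist eps H C x c"
    unfolding enh_Delta_def using assms by (rule INF_lower)
  also have "\<dots> \<le> ereal (norm (x - c))"
    unfolding enh_dist_def by (rule enh_formula_le_dist)
  finally show ?thesis .
qed

text \<open>With \<open>\<eta> = m / h\<close>, the enhanced distance is \<open>(1 - \<eta> (1 - \<epsilon> d)) / \<epsilon>\<close>, and
  \<open>\<eta> (1 - \<epsilon> d) \<le> m / a < 1 - \<epsilon> s\<close>; if \<open>h = 0\<close>, then \<open>d \<ge> 1/\<epsilon>\<close> and the formula returns \<open>d\<close>.\<close>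
lemma enh_formula_ratio_gt:
  fixes eps s a m h d :: real
  assumes eps: "eps > 0" and a: "a > 0" and h: "0 \<le> h" "h \<le> m"
    and m: "m < (1 - eps * s) * a" and h_lower: "(1 - eps * d) * a \<le> h"
  shows "ereal s < enh_formula eps (uvp_ratio m h) d"
proof -
  have "(1 - eps * d) * a < (1 - eps * s) * a" using h h_lower m by linarith
  then have "s < d" using a eps by (simp add: mult_less_cancel_right)
  show ?thesis
  proof (cases "h = 0")
    case True
    then have "1 - eps * d \<le> 0" using h_lower a by (simp add: mult_le_0_iff)
    then have "1 / eps \<le> d" using eps by (simp add: field_simps)
    with True \<open>s < d\<close> show ?thesis by (auto simp: enh_formula_def uvp_ratio_def)
  next
    case False
    with h have "h > 0" by simp
    define eta where "eta = m / h"
    have "eta \<ge> 0" using \<open>h > 0\<close> h unfolding eta_def by simp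
    have "1 - eps * d \<le> h / a" using h_lower a by (simp add: field_simps)
    then have "eta * (1 - eps * d) \<le> eta * (h / a)" using \<open>eta \<ge> 0\<close> by (rule mult_left_mono)
    also have "\<dots> = m / a" using \<open>h > 0\<close> unfolding eta_def by simp
    also have "\<dots> < 1 - eps * s" using m a by (simp add: field_simps)
    finally have "eps * s < 1 - eta * (1 - eps * d)" by simp
    then have "s < eta * d - (eta - 1) / eps" using eps by (simp add: field_simps)
    with \<open>h > 0\<close> \<open>s < d\<close> show ?thesis
      by (simp add: enh_formula_def uvp_ratio_def eta_def[symmetric])
  qed
qed

lemma enh_Delta_gt:
  fixes H :: "'a::real_normed_vector \<Rightarrow> real"
  assumes eps: "eps > 0" and a: "a > 0" and "finite C"
    and H: "\<And>c. c \<in> C \<Longrightarrow> 0 \<le> H c \<and> H c \<le> m \<and> (1 - eps * norm (x - c)) * a \<le> H c"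
    and m: "m < (1 - eps * s) * a"
  shows "ereal s < enh_Delta eps H C x"
proof (cases "C = {}")
  case True
  then show ?thesis by (simp add: enh_Delta_def top_ereal_def)
next
  case False
  have "ereal s < enh_dist eps H C x c" if "c \<in> C" for c
  proof -
    have "Max (H ` C) \<le> m" using H \<open>finite C\<close> False by simp
    moreover have "H c \<le> Max (H ` C)" using \<open>finite C\<close> that by simp
    ultimately show ?thesis
      unfolding enh_dist_def enh_eta_def
      using enh_formula_ratio_gt[OF eps a _ _ _] H[OF that] m by force
  qed
  then show ?thesis
    unfolding enh_Delta_def using \<open>finite C\<close> False by (simp add: finite_less_Inf_iff)
qed

lemma ekcenter_run_step:
  assumes "ekcenter_run k C0 X eps H cs" and "i < k"
  shows "cs ! i \<in> X - (C0 \<union> set (take i cs))"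
    and "\<And>x. x \<in> X - (C0 \<union> set (take i cs)) \<Longrightarrow>
      enh_Delta eps H (C0 \<union> set (take i cs)) x \<le> enh_Delta eps H (C0 \<union> set (take i cs)) (cs ! i)"
  using assms unfolding ekcenter_run_def Let_def by auto

lemma ekcenter_run_length: "ekcenter_run k C0 X eps H cs \<Longrightarrow> length cs = k"
  unfolding ekcenter_run_def by simp

lemma ekcenter_run_subset:
  assumes "ekcenter_run k C0 X eps H cs"
  shows "set cs \<subseteq> X"
proof
  fix c assume "c \<in> set cs"
  then obtain i where "i < k" "c = cs ! i"
    using ekcenter_run_length[OF assms] by (auto simp: in_set_conv_nth)
  then show "c \<in> X" using ekcenter_run_step(1)[OF assms] by blast
qed

lemma ekcenter_run_distinct:
  assumes run: "ekcenter_run k C0 X eps H cs"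
  shows "distinct cs"
proof -
  have len: "length cs = k" using ekcenter_run_length[OF run] .
  have "distinct (take i cs)" if "i \<le> k" for i
    using that
  proof (induction i)
    case (Suc i)
    then have "cs ! i \<notin> set (take i cs)" using ekcenter_run_step(1)[OF run] by simp
    with Suc show ?case using len by (simp add: take_Suc_conv_app_nth)
  qed simp
  then show ?thesis using len by (metis order_refl take_all)
qed

lemma ekcenter_run_separated:
  fixes X :: "'a::real_normed_vector set"
  assumes run: "ekcenter_run k C0 X eps H cs" and "x \<in> X" and "0 \<le> s"
    and Delta: "\<And>i. i \<le> k \<Longrightarrow> ereal s < enh_Delta eps H (C0 \<union> set (take i cs)) x"
  shows "x \<notin> set cs" and "pairwise (\<lambda>p q. s < norm (p - q)) (insert x (set cs))"
proof -
  have len: "length cs = k" using ekcenter_run_length[OF run] .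
  have not_chosen: "x \<notin> C0 \<union> set (take i cs)" if "i \<le> k" for i
  proof
    assume "x \<in> C0 \<union> set (take i cs)"
    then have "enh_Delta eps H (C0 \<union> set (take i cs)) x \<le> ereal (norm (x - x))"
      by (rule enh_Delta_le_norm)
    with Delta[OF that] have "ereal s < ereal (norm (x - x))" by (rule less_le_trans)
    with \<open>0 \<le> s\<close> show False by simp
  qed
  then show "x \<notin> set cs" using not_chosen[OF order_refl] len by simp
  have "pairwise (\<lambda>p q. s < norm (p - q)) (insert x (set (take i cs)))" if "i \<le> k" for i
    using that
  proof (induction i)
    case (Suc i)
    let ?C = "C0 \<union> set (take i cs)"
    have "i < k" using Suc.prems by simp
    have far_x: "s < norm (x - cs ! i)"
    proof -
      have "cs ! i \<in> C0 \<union> set (take (Suc i) cs)"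
        using \<open>i < k\<close> len by (simp add: take_Suc_conv_app_nth)
      then have "enh_Delta eps H (C0 \<union> set (take (Suc i) cs)) x \<le> ereal (norm (x - cs ! i))"
        by (rule enh_Delta_le_norm)
      with Delta[OF Suc.prems] have "ereal s < ereal (norm (x - cs ! i))" by (rule less_le_trans)
      then show ?thesis by simp
    qed
    have far_c: "s < norm (cs ! i - c)" if "c \<in> set (take i cs)" for c
    proof -
      have "x \<in> X - ?C" using \<open>x \<in> X\<close> not_chosen[of i] \<open>i < k\<close> by simp
      have "ereal s < enh_Delta eps H ?C x" using Delta \<open>i < k\<close> by simp
      also have "\<dots> \<le> enh_Delta eps H ?C (cs ! i)"
        using ekcenter_run_step(2)[OF run \<open>i < k\<close> \<open>x \<in> X - ?C\<close>] .
      also have "\<dots> \<le> ereal (norm (cs ! i - c))" using that by (intro enh_Delta_le_norm) simp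
      finally show ?thesis by simp
    qed
    have far: "s < norm (cs ! i - y)" "s < norm (y - cs ! i)" if "y \<in> insert x (set (take i cs))" for y
      using that far_x far_c by (auto simp: norm_minus_commute)
    have "insert x (set (take (Suc i) cs)) = insert (cs ! i) (insert x (set (take i cs)))"
      using \<open>i < k\<close> len by (auto simp: take_Suc_conv_app_nth)
    then show ?case using Suc.IH Suc.prems far by (simp add: pairwise_insert)
  qed simp
  from this[OF order_refl] show "pairwise (\<lambda>p q. s < norm (p - q)) (insert x (set cs))"
    using len by simp
qed

lemma ekcenter_run_superior_point_separated:
  fixes X :: "'a::real_normed_vector set"
  assumes run: "ekcenter_run k {} X eps H cs" and "x \<in> X"
    and "eps > 0" and "a > 0" and "0 \<le> s"
    and H: "\<And>c. c \<in> set cs \<Longrightarrow> 0 \<le> H c \<and> H c \<le> m \<and> (1 - eps * norm (x - c)) * a \<le> H c"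
    and m: "m < (1 - eps * s) * a"
  shows "card (insert x (set cs)) = Suc k"
    and "pairwise (\<lambda>p q. s < norm (p - q)) (insert x (set cs))"
proof -
  have Delta: "ereal s < enh_Delta eps H ({} \<union> set (take i cs)) x" for i
  proof -
    have "ereal s < enh_Delta eps H (set (take i cs)) x"
      by (rule enh_Delta_gt[OF \<open>eps > 0\<close> \<open>a > 0\<close> finite_set _ m]) (erule H[OF in_set_takeD])
    then show ?thesis by simp
  qed
  have "x \<notin> set cs"
    using \<open>0 \<le> s\<close> Delta by (rule ekcenter_run_separated(1)[OF run \<open>x \<in> X\<close>])
  then show "card (insert x (set cs)) = Suc k"
    using ekcenter_run_distinct[OF run] ekcenter_run_length[OF run] by (simp add: distinct_card)
  show "pairwise (\<lambda>p q. s < norm (p - q)) (insert x (set cs))"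
    using \<open>0 \<le> s\<close> Delta by (rule ekcenter_run_separated(2)[OF run \<open>x \<in> X\<close>])
qed

theorem theorem6:
  fixes X :: "'a::euclidean_space set" and A :: "'a \<Rightarrow> nat \<Rightarrow> real"
    and B T :: nat and eps :: real and xhat :: 'a
  assumes "finite X" and "X \<noteq> {}"
    and "T \<ge> 1"
    and "1 \<le> B div T" and "B div T \<le> card X"
    and "eps > 0"
    and "\<forall>x b. b \<in> {1..T} \<longrightarrow> 0 \<le> A x b \<and> A x b \<le> 1"
    and "uvp_monotone A T"
    and "uvp_smooth A X T eps"
    and "enhanced_fullcent_output B T X eps A xhat"
  shows "A xhat T \<ge> (1 - 2 * eps * kcenter_radius X (B div T)) * (MAX x\<in>X. A x T)"
proof -
  define k where "k = B div T"
  define r where "r = kcenter_radius X k"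
  have k: "1 \<le> k" "k \<le> card X" using assms(4,5) unfolding k_def by auto
  have "T \<in> {1..T}" using assms(3) by simp
  then have A_nonneg: "0 \<le> A x T" for x using assms(7) by blast
  obtain cs where run: "ekcenter_run k {} X eps (\<lambda>c. A c T) cs"
    and best: "\<And>c. c \<in> set cs \<Longrightarrow> A c T \<le> A xhat T"
    using assms(10) unfolding enhanced_fullcent_output_def k_def by blast
  have "(MAX x\<in>X. A x T) \<in> (\<lambda>x. A x T) ` X" using assms(1,2) by simp
  then obtain xopt where "xopt \<in> X" and opt: "(MAX x\<in>X. A x T) = A xopt T" by blast
  show ?thesis
  proof (rule ccontr)
    assume "\<not> ?thesis"
    then have low: "A xhat T < (1 - eps * (2 * r)) * A xopt T"
      unfolding opt r_def k_def by (simp add: mult.assoc mult.left_commute)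
    then have "0 < A xopt T"
      using A_nonneg[of xhat] A_nonneg[of xopt] by (cases "A xopt T = 0") auto
    have "(1 - eps * norm (xopt - c)) * A xopt T \<le> A c T" if "c \<in> set cs" for c
      using uvp_smooth_lower_bound[OF assms(9) _ \<open>xopt \<in> X\<close> \<open>T \<in> {1..T}\<close>
          \<open>0 < A xopt T\<close>, of c]
        that ekcenter_run_subset[OF run] by (auto simp: norm_minus_commute)
    moreover have "0 \<le> 2 * r" using kcenter_radius_nonneg[OF assms(1) k] unfolding r_def by simp
    ultimately have card: "card (insert xopt (set cs)) = Suc k"
      and sep: "pairwise (\<lambda>p q. 2 * r < norm (p - q)) (insert xopt (set cs))"
      using ekcenter_run_superior_point_separated[OF run \<open>xopt \<in> X\<close> assms(6)
          \<open>0 < A xopt T\<close> _ _ low]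
        A_nonneg best by blast+
    have "insert xopt (set cs) \<subseteq> X"
      using \<open>xopt \<in> X\<close> ekcenter_run_subset[OF run] by simp
    then have "card (insert xopt (set cs)) \<le> k"
      using sep unfolding r_def by (rule kcenter_radius_separated_card_le[OF assms(1) k])
    with card show False by simp
  qed
qed

end
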